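(* Let $\mathfrak{r}$ be a totally real subspace of $\mathfrak{g}_\alpha$ of dimension $r$, let $H$ be the connected Lie subgroup of $AN$ with Lie algebra $\mathfrak{a}\oplus\mathfrak{r}$, and let $W\in\mathfrak{g}_\alpha\ominus(\mathfrak{r}\oplus J\mathfrak{r})$, $y\in\mathbb{R}$. Then the mean curvature vector $\mathcal{H}$ and the second fundamental form $\mathrm{II}$ of the orbit $H\cdot\operatorname{Exp}(2W+yZ)(o)$ satisfy $$\lVert\mathcal{H}\rVert^2=\frac{(1+r)^2\lVert W\rVert^4+(2+r)^2y^2(1+y^2)+\lVert W\rVert^2\bigl(1+8y^2+r^2(1+2y^2)+2r(1+3y^2)\bigr)}{4(1+y^2+\lVert W\rVert^2)^2},$$ $$\lVert\mathrm{II}\rVert^2=\frac{(1+r)\lVert W\rVert^4+(4+3r)y^2(1+y^2)+\lVert W\rVert^2\bigl(1+r+4y^2(2+r)\bigr)}{4(1+y^2+\lVert W\rVert^2)^2}.$$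
   Context: $\mathbb{C}H^n$ is the complex hyperbolic space of constant holomorphic sectional curvature $-1$; $G=SU(1,n)$, $o\in\mathbb{C}H^n$ fixed with stabilizer $K$, Cartan decomposition $\mathfrak{g}=\mathfrak{k}\oplus\mathfrak{p}$, $\mathfrak{a}\subset\mathfrak{p}$ maximal abelian ($1$-dimensional), restricted roots $\pm\alpha,\pm2\alpha$ with $\alpha,2\alpha$ positive, root spaces $\mathfrak{g}_\lambda$, $\mathfrak{n}=\mathfrak{g}_\alpha\oplus\mathfrak{g}_{2\alpha}$, $AN$ the connected subgroup with Lie algebra $\mathfrak{a}\oplus\mathfrak{n}$, acting simply transitively on $\mathbb{C}H^n$. $\mathfrak{a}\oplus\mathfrak{n}$ carries an inner product and complex structure $J$ (with $J\mathfrak{g}_\alpha=\mathfrak{g}_\alpha$, $J\mathfrak{a}=\mathfrak{g}_{2\alpha}$) making $AN$ with left-invariant metric holomorphically isometric to $\mathbb{C}H^n$; $B\in\mathfrak{a}$ is a unit vector and $Z=JB$. $\operatorname{Exp}$ is the Lie exponential of $AN$; $\ominus$ is orthogonal complement. A subspace $W\subset\mathfrak{g}_\alpha$ is totally real if $JW\perp W$. Norms $\lVert\mathcal{H}\rVert^2$, $\lVert\mathrm{II}\rVert^2$ are computed with the Riemannian metric of $\mathbb{C}H^n$ (the mean curvature vector is the trace of $\mathrm{II}$). *)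

theory Defs
  imports "HOL-Analysis.Analysis"
begin

text \<open>Algebraic model of the solvable part a + n of su(1,n), with n - 1 = CARD('m).
  An element a B + U + x Z (U in g_alpha = C^(n-1)) is the triple (a, U, x).
  The inner product is the product inner product: a b + Re(U . conj V) + x y.
  Normalisation (holomorphic sectional curvature -1):
  [B,U] = U/2, [B,Z] = Z, [U,V] = <J U, V> Z, J U = i U, J B = Z.\<close>

type_synonym ('m) an = "real \<times> (complex ^ ('m::finite)) \<times> real"

definition vecB :: "('m::finite) an" where "vecB = (1, 0, 0)"
definition vecZ :: "('m::finite) an" where "vecZ = (0, 0, 1)"

definition Jga :: "complex ^ ('m::finite) \<Rightarrow> complex ^ 'm" where
  "Jga U = (\<chi> k. \<i> * U $ k)"

definition Jan :: "('m::finite) an \<Rightarrow> 'm an" where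
  "Jan X = (case X of (a, U, x) \<Rightarrow> (- x, Jga U, a))"

definition g_alpha :: "('m::finite) an set" where
  "g_alpha = {(0, U, 0) | U. True}"

definition an_bracket :: "('m::finite) an \<Rightarrow> 'm an \<Rightarrow> 'm an" where
  "an_bracket X Y = (case X of (a, U, x) \<Rightarrow> case Y of (b, V, y) \<Rightarrow>
     (0, (a / 2) *\<^sub>R V - (b / 2) *\<^sub>R U, a * y - b * x + inner (Jga U) V))"

text \<open>Levi-Civita connection of the left-invariant metric on left-invariant fields (Koszul formula).\<close>
definition nabla :: "('m::finite) an \<Rightarrow> 'm an \<Rightarrow> 'm an" where
  "nabla X Y = (THE v. \<forall>W. inner v W =
     (inner (an_bracket X Y) W - inner (an_bracket Y W) X + inner (an_bracket W X) Y) / 2)"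

text \<open>Ad(Exp V) = exp(ad V)\<close>
definition Ad_Exp :: "('m::finite) an \<Rightarrow> 'm an \<Rightarrow> 'm an" where
  "Ad_Exp V X = (\<Sum>k. (1 / fact k) *\<^sub>R ((an_bracket V ^^ k) X))"

definition totally_real :: "('m::finite) an set \<Rightarrow> bool" where
  "totally_real R \<longleftrightarrow> subspace R \<and> R \<subseteq> g_alpha \<and> (\<forall>u\<in>R. \<forall>v\<in>R. inner (Jan u) v = 0)"

definition a_plus :: "('m::finite) an set \<Rightarrow> 'm an set" where
  "a_plus R = {t *\<^sub>R vecB + u | t u. u \<in> R}"

definition normal_part :: "('m::finite) an set \<Rightarrow> 'm an \<Rightarrow> 'm an" where
  "normal_part S v = (THE w. (\<forall>s\<in>S. inner w s = 0) \<and> v - w \<in> S)"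

text \<open>Second fundamental form of the connected subgroup with Lie algebra S, at the identity.\<close>
definition sff :: "('m::finite) an set \<Rightarrow> 'm an \<Rightarrow> 'm an \<Rightarrow> 'm an" where
  "sff S X Y = normal_part S (nabla X Y)"

definition orthonormal_basis_of :: "('m::finite) an set \<Rightarrow> 'm an set \<Rightarrow> bool" where
  "orthonormal_basis_of E S \<longleftrightarrow> finite E \<and> E \<subseteq> S \<and> pairwise orthogonal E \<and>
     (\<forall>e\<in>E. norm e = 1) \<and> span E = S"

text \<open>Tangent space (left-trivialised) at g = Exp V of the orbit H g = g (g^-1 H g):
  the Lie algebra Ad(g^-1) h = Ad(Exp(-V)) h of the conjugate subgroup.\<close>
definition orbit_tangent :: "('m::finite) an set \<Rightarrow> 'm an \<Rightarrow> 'm an set" where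
  "orbit_tangent h V = Ad_Exp (- V) ` h"

definition mean_curv :: "('m::finite) an set \<Rightarrow> 'm an set \<Rightarrow> 'm an" where
  "mean_curv S E = (\<Sum>e\<in>E. sff S e e)"

definition sff_norm2 :: "('m::finite) an set \<Rightarrow> 'm an set \<Rightarrow> real" where
  "sff_norm2 S E = (\<Sum>e\<in>E. \<Sum>f\<in>E. (norm (sff S e f))\<^sup>2)"

end

theory Submission
  imports Defs
begin

(* Left-translated to the identity, the tangent space of the orbit through g = Exp(2W + yZ) is
   Ad(g^-1)(a + r) = R X0 + r with X0 = B + W + yZ, because ad(2W + yZ) squares to zero on a + r.
   The mean curvature and |II|^2 are traces of expressions bilinear in II, so they may be computed
   in the adapted orthonormal basis X0/|X0| together with an orthonormal basis of r.  There the
   Koszul formula gives II(X0,X0) = nabla_X0 X0, II(X0,U) = II(U,X0) = -(y/2) JU and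
   II(U,V) = <U,V>/2 (B - X0/|X0|^2), and both formulas follow with |X0|^2 = 1 + y^2 + |W|^2. *)

lemma linear_Jga: "linear Jga"
  by (rule linearI) (simp_all add: Jga_def vec_eq_iff distrib_left scaleR_conv_of_real)

lemma inner_Jga_left: "inner (Jga U) V = - inner U (Jga V)"
  unfolding Jga_def inner_vec_def
  by (simp add: inner_complex_def sum_negf[symmetric] algebra_simps)

lemma inner_Jga_Jga [simp]: "inner (Jga U) (Jga V) = inner U V"
  unfolding Jga_def inner_vec_def by (simp add: inner_complex_def algebra_simps)

lemma inner_Jga_self [simp]: "inner (Jga U) U = 0"
  using inner_Jga_left[of U U] by (simp add: inner_commute)

lemma inner_self_Jga [simp]: "inner U (Jga U) = 0"
  using inner_Jga_self[of U] by (simp add: inner_commute)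

lemma norm_Jga [simp]: "norm (Jga U) = norm U"
  by (simp add: norm_eq_sqrt_inner)

lemma nabla_eq:
  "nabla (a, U, x) (b, V, z) =
     (inner U V / 2 + x * z, - (b/2) *\<^sub>R U - (x/2) *\<^sub>R Jga V - (z/2) *\<^sub>R Jga U,
      inner (Jga U) V / 2 - b * x)"
    (is "_ = ?v")
proof -
  have koszul: "inner ?v Q = (inner (an_bracket (a, U, x) (b, V, z)) Q
      - inner (an_bracket (b, V, z) Q) (a, U, x) + inner (an_bracket Q (a, U, x)) (b, V, z)) / 2"
    for Q
  proof (cases Q)
    case (fields c P q)
    have swap: "inner (Jga V) P = inner P (Jga V)" "inner (Jga P) U = - inner P (Jga U)"
      "inner (Jga U) V = - inner U (Jga V)" "inner (Jga U) P = inner P (Jga U)"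
      "inner U P = inner P U" "inner V P = inner P V" "inner V U = inner U V"
      by (rule inner_commute inner_Jga_left)+
    show ?thesis
      unfolding fields an_bracket_def
      by (simp add: inner_diff_left inner_diff_right, simp only: swap, simp add: algebra_simps)
  qed
  show ?thesis
    unfolding nabla_def
  proof (rule the_equality)
    fix v
    assume "\<forall>Q. inner v Q = (inner (an_bracket (a, U, x) (b, V, z)) Q
      - inner (an_bracket (b, V, z) Q) (a, U, x) + inner (an_bracket Q (a, U, x)) (b, V, z)) / 2"
    with koszul show "v = ?v"
      by (metis vector_eq_rdot)
  qed (use koszul in blast)
qed

lemma bilinear_nabla: "bilinear nabla"
proof -
  have J: "Jga (U + V) = Jga U + Jga V" "Jga (c *\<^sub>R U) = c *\<^sub>R Jga U" for U V c
    by (simp_all add: linear_add[OF linear_Jga] linear_scale[OF linear_Jga])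
  have "linear (nabla X)" for X
    by (cases X)
      (auto intro!: linearI simp: split_paired_all nabla_eq J add_divide_distrib algebra_simps)
  moreover have "linear (\<lambda>X. nabla X Y)" for Y
    by (cases Y)
      (auto intro!: linearI simp: split_paired_all nabla_eq J add_divide_distrib algebra_simps)
  ultimately show ?thesis
    unfolding bilinear_def by blast
qed

lemma normal_part_eqI:
  assumes "subspace S" and "\<forall>s\<in>S. inner n s = 0" and "v - n \<in> S"
  shows "normal_part S v = n"
  unfolding normal_part_def
proof (rule the_equality)
  fix m
  assume m: "(\<forall>s\<in>S. inner m s = 0) \<and> v - m \<in> S"
  have "m - n \<in> S"
    using subspace_diff[OF assms(1) assms(3), of "v - m"] m by simp
  then have "inner (m - n) (m - n) = 0"
    using m assms(2) by (simp add: inner_diff_left)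
  then show "m = n" by simp
qed (use assms in blast)

lemma normal_part:
  assumes "subspace S"
  shows "\<forall>s\<in>S. inner (normal_part S v) s = 0" and "v - normal_part S v \<in> S"
proof -
  have "span S = S"
    using assms by (simp add: span_eq_iff)
  then obtain p n where "p \<in> S" and "\<And>s. s \<in> S \<Longrightarrow> orthogonal n s" and "v = p + n"
    using orthogonal_subspace_decomp_exists[of S v] by metis
  then have "\<forall>s\<in>S. inner n s = 0" and "v - n \<in> S"
    by (simp_all add: orthogonal_def)
  moreover have "normal_part S v = n"
    using normal_part_eqI[OF assms] calculation by blast
  ultimately show "\<forall>s\<in>S. inner (normal_part S v) s = 0" and "v - normal_part S v \<in> S"
    by simp_all
qed

lemma linear_normal_part:
  assumes "subspace S"
  shows "linear (normal_part S)"
proof (rule linearI)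
  note np = normal_part[OF assms]
  show "normal_part S (u + v) = normal_part S u + normal_part S v" for u v
  proof (rule normal_part_eqI[OF assms])
    show "\<forall>s\<in>S. inner (normal_part S u + normal_part S v) s = 0"
      using np(1) by (simp add: inner_add_left)
    have "(u - normal_part S u) + (v - normal_part S v) \<in> S"
      using np(2) subspace_add[OF assms] by blast
    then show "u + v - (normal_part S u + normal_part S v) \<in> S"
      by (simp add: algebra_simps)
  qed
  show "normal_part S (c *\<^sub>R u) = c *\<^sub>R normal_part S u" for c u
  proof (rule normal_part_eqI[OF assms])
    show "\<forall>s\<in>S. inner (c *\<^sub>R normal_part S u) s = 0"
      using np(1) by simp
    have "c *\<^sub>R (u - normal_part S u) \<in> S"
      using np(2) subspace_scale[OF assms] by blast
    then show "c *\<^sub>R u - c *\<^sub>R normal_part S u \<in> S"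
      by (simp add: algebra_simps)
  qed
qed

lemma bilinear_sff:
  assumes "subspace S"
  shows "bilinear (sff S)"
  using bilinear_nabla linear_compose[OF _ linear_normal_part[OF assms]]
  unfolding bilinear_def sff_def comp_def by blast

lemma orthonormal_basis_of_inner:
  assumes "orthonormal_basis_of E S" and "e \<in> E" and "f \<in> E"
  shows "inner e f = (if e = f then 1 else 0)"
  using assms unfolding orthonormal_basis_of_def pairwise_def orthogonal_def
  by (auto simp: dot_square_norm)

lemma orthonormal_basis_of_expansion:
  assumes E: "orthonormal_basis_of E S" and "a \<in> S"
  shows "(\<Sum>e\<in>E. inner a e *\<^sub>R e) = a"
proof -
  have fin: "finite E" and "span E = S"
    using E unfolding orthonormal_basis_of_def by auto
  then obtain c where a: "a = (\<Sum>f\<in>E. c f *\<^sub>R f)"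
    using \<open>a \<in> S\<close> span_finite[OF fin] by auto
  have "inner a e = c e" if "e \<in> E" for e
  proof -
    have "inner a e = (\<Sum>f\<in>E. if f = e then c f else 0)"
      unfolding a inner_sum_left
      by (rule sum.cong) (simp_all add: orthonormal_basis_of_inner[OF E _ that])
    then show ?thesis
      using fin that by simp
  qed
  then show ?thesis
    using a by simp
qed

lemma orthonormal_basis_of_parseval:
  assumes E: "orthonormal_basis_of E S" and "a \<in> S"
  shows "(\<Sum>e\<in>E. inner a e * inner b e) = inner a b"
proof -
  have "inner a b = inner (\<Sum>e\<in>E. inner a e *\<^sub>R e) b"
    using orthonormal_basis_of_expansion[OF assms] by simp
  also have "\<dots> = (\<Sum>e\<in>E. inner a e * inner e b)"
    by (simp add: inner_sum_left)
  finally show ?thesis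
    by (simp add: inner_commute)
qed

lemma orthonormal_basis_of_card:
  assumes "orthonormal_basis_of E S"
  shows "card E = dim S"
proof -
  have "pairwise orthogonal E" and "0 \<notin> E" and "span E = S"
    using assms unfolding orthonormal_basis_of_def by auto
  then show ?thesis
    using pairwise_orthogonal_independent dim_span_eq_card_independent by metis
qed

lemma orthonormal_basis_of_exists:
  assumes "subspace S"
  obtains B where "orthonormal_basis_of B S"
proof -
  obtain B where "B \<subseteq> S" "pairwise orthogonal B" "\<And>x. x \<in> B \<Longrightarrow> norm x = 1"
    "independent B" "span B = S"
    using orthonormal_basis_subspace[OF assms] by metis
  then have "orthonormal_basis_of B S"
    unfolding orthonormal_basis_of_def by (simp add: independent_imp_finite)
  then show thesis ..
qed

lemma bilinear_inner_linear:
  assumes "linear g" and "linear h"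
  shows "bilinear (\<lambda>u v. inner (g u) (h v))"
  using assms unfolding bilinear_def linear_iff
  by (simp add: inner_add_left inner_add_right)

lemma orthonormal_basis_of_trace_bilinear:
  assumes E: "orthonormal_basis_of E S" and F: "orthonormal_basis_of F S" and \<beta>: "bilinear \<beta>"
  shows "(\<Sum>e\<in>E. \<beta> e e) = (\<Sum>f\<in>F. \<beta> f f)"
proof -
  have "E \<subseteq> S" and "F \<subseteq> S" and "finite F"
    using E F unfolding orthonormal_basis_of_def by auto
  have expand: "\<beta> e e = (\<Sum>f\<in>F. \<Sum>g\<in>F. (inner e f * inner e g) *\<^sub>R \<beta> f g)" if "e \<in> E" for e
  proof -
    have "(\<Sum>f\<in>F. inner e f *\<^sub>R f) = e"
      using orthonormal_basis_of_expansion[OF F] \<open>E \<subseteq> S\<close> that by blast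
    then have "\<beta> e e = \<beta> (\<Sum>f\<in>F. inner e f *\<^sub>R f) (\<Sum>g\<in>F. inner e g *\<^sub>R g)"
      by simp
    then show ?thesis
      by (simp add: bilinear_sum[OF \<beta>] sum.cartesian_product bilinear_lmul[OF \<beta>]
          bilinear_rmul[OF \<beta>] mult.commute)
  qed
  have "(\<Sum>e\<in>E. \<beta> e e) = (\<Sum>f\<in>F. \<Sum>g\<in>F. (\<Sum>e\<in>E. inner f e * inner g e) *\<^sub>R \<beta> f g)"
    by (simp add: expand scaleR_sum_left sum.swap[of _ E] inner_commute)
  also have "\<dots> = (\<Sum>f\<in>F. \<Sum>g\<in>F. inner f g *\<^sub>R \<beta> f g)"
    using orthonormal_basis_of_parseval[OF E] \<open>F \<subseteq> S\<close> by (auto intro!: sum.cong)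
  also have "\<dots> = (\<Sum>f\<in>F. \<beta> f f)"
  proof (rule sum.cong)
    fix f
    assume "f \<in> F"
    have "(\<Sum>g\<in>F. inner f g *\<^sub>R \<beta> f g) = (\<Sum>g\<in>F. if f = g then \<beta> f g else 0)"
      by (rule sum.cong) (simp_all add: orthonormal_basis_of_inner[OF F \<open>f \<in> F\<close>])
    then show "(\<Sum>g\<in>F. inner f g *\<^sub>R \<beta> f g) = \<beta> f f"
      using \<open>finite F\<close> \<open>f \<in> F\<close> by simp
  qed simp
  finally show ?thesis .
qed

lemma orthonormal_basis_of_sum_norm_bilinear:
  fixes \<beta> :: "('m::finite) an \<Rightarrow> 'm an \<Rightarrow> 'b::real_inner"
  assumes E: "orthonormal_basis_of E S" and F: "orthonormal_basis_of F S" and \<beta>: "bilinear \<beta>"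
  shows "(\<Sum>e\<in>E. \<Sum>e'\<in>E. (norm (\<beta> e e'))\<^sup>2) = (\<Sum>f\<in>F. \<Sum>f'\<in>F. (norm (\<beta> f f'))\<^sup>2)"
proof -
  have "linear (\<beta> a)" and "linear (\<lambda>u. \<beta> u a)" for a
    using \<beta> unfolding bilinear_def by blast+
  then have left: "bilinear (\<lambda>u v. inner (\<beta> a u) (\<beta> a v))"
    and right: "bilinear (\<lambda>u v. inner (\<beta> u a) (\<beta> v a))" for a
    by (simp_all add: bilinear_inner_linear)
  have "(\<Sum>e\<in>E. \<Sum>e'\<in>E. (norm (\<beta> e e'))\<^sup>2) = (\<Sum>e\<in>E. \<Sum>f'\<in>F. (norm (\<beta> e f'))\<^sup>2)"
    unfolding power2_norm_eq_inner
    using orthonormal_basis_of_trace_bilinear[OF E F left] by simp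
  also have "\<dots> = (\<Sum>f'\<in>F. \<Sum>e\<in>E. (norm (\<beta> e f'))\<^sup>2)"
    by (rule sum.swap)
  also have "\<dots> = (\<Sum>f'\<in>F. \<Sum>f\<in>F. (norm (\<beta> f f'))\<^sup>2)"
    unfolding power2_norm_eq_inner
    using orthonormal_basis_of_trace_bilinear[OF E F right] by simp
  also have "\<dots> = (\<Sum>f\<in>F. \<Sum>f'\<in>F. (norm (\<beta> f f'))\<^sup>2)"
    by (rule sum.swap)
  finally show ?thesis .
qed

lemma Ad_Exp_eq_if_ad_square_zero:
  assumes "an_bracket V (an_bracket V X) = 0"
  shows "Ad_Exp V X = X + an_bracket V X"
proof -
  define f where "f = an_bracket V"
  have "f 0 = 0"
    unfolding f_def an_bracket_def by (cases V) (simp add: zero_prod_def)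
  then have "(f ^^ k) 0 = 0" for k
    by (induction k) simp_all
  then have "(f ^^ Suc (Suc k)) X = 0" for k
    using assms by (simp only: funpow_Suc_right comp_def f_def)
  then have higher: "(1 / fact n) *\<^sub>R (f ^^ n) X = 0" if "n \<notin> {0, 1}" for n
    using that by (cases n; cases "n - 1") auto
  have "Ad_Exp V X = (\<Sum>n\<in>{0, 1::nat}. (1 / fact n) *\<^sub>R (f ^^ n) X)"
    unfolding Ad_Exp_def f_def[symmetric] by (rule suminf_finite) (use higher in auto)
  then show ?thesis
    unfolding f_def by simp
qed

locale totally_real_orbit =
  fixes R :: "('m::finite) an set" and w :: "complex ^ 'm" and y :: real
  assumes totally_real_R: "totally_real R"
    and w_perp_R: "\<And>u. u \<in> R \<Longrightarrow> inner (0, w, 0) u = 0 \<and> inner (0, w, 0) (Jan u) = 0"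
begin

lemma subspace_R: "subspace R"
  using totally_real_R unfolding totally_real_def by blast

lemma span_R: "span R = R"
  using subspace_R by (simp add: span_eq_iff)

lemma R_cases:
  assumes "u \<in> R"
  obtains U where "u = (0, U, 0)" and "(0, U, 0) \<in> R"
  using assms totally_real_R unfolding totally_real_def g_alpha_def by blast

lemma w_perp:
  assumes "(0, U, 0) \<in> R"
  shows "inner w U = 0" and "inner (Jga w) U = 0" and "inner (Jga U) w = 0"
  using w_perp_R[OF assms] inner_Jga_left[of w U] inner_Jga_left[of U w]
  by (simp_all add: Jan_def inner_real_def inner_commute)

lemma Jga_perp:
  assumes "(0, U, 0) \<in> R" and "(0, V, 0) \<in> R"
  shows "inner (Jga U) V = 0"
  using assms totally_real_R unfolding totally_real_def by (force simp: Jan_def inner_real_def)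

(* X0 = B + W + yZ = Ad(Exp(-(2W + yZ))) B *)

definition X0 :: "'m an" where
  "X0 = (1, w, y)"

definition T :: "'m an set" where
  "T = span (insert X0 R)"

lemma inner_X0_R:
  assumes "u \<in> R"
  shows "inner X0 u = 0"
proof -
  obtain U where "u = (0, U, 0)" and "(0, U, 0) \<in> R"
    using assms by (rule R_cases)
  then show ?thesis
    by (simp add: X0_def w_perp)
qed

lemma inner_X0_X0: "inner X0 X0 = 1 + y\<^sup>2 + (norm w)\<^sup>2"
  unfolding X0_def inner_Pair inner_real_def power2_norm_eq_inner by (simp add: power2_eq_square)

lemma T_eq: "T = {t *\<^sub>R X0 + u | t u. u \<in> R}"
proof -
  have "T = {x. \<exists>t. x - t *\<^sub>R X0 \<in> R}"
    unfolding T_def span_insert span_R ..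
  also have "\<dots> = {t *\<^sub>R X0 + u | t u. u \<in> R}"
  proof (intro set_eqI iffI)
    fix x
    assume "x \<in> {x. \<exists>t. x - t *\<^sub>R X0 \<in> R}"
    then obtain t where "x - t *\<^sub>R X0 \<in> R"
      by blast
    then show "x \<in> {t *\<^sub>R X0 + u | t u. u \<in> R}"
      by (intro CollectI exI[of _ t] exI[of _ "x - t *\<^sub>R X0"]) simp
  next
    fix x
    assume "x \<in> {t *\<^sub>R X0 + u | t u. u \<in> R}"
    then obtain t u where "u \<in> R" and "x = t *\<^sub>R X0 + u"
      by blast
    then show "x \<in> {x. \<exists>t. x - t *\<^sub>R X0 \<in> R}"
      by (intro CollectI exI[of _ t]) simp
  qed
  finally show ?thesis .
qed

lemma subspace_T: "subspace T"
  unfolding T_def by (rule subspace_span)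

lemma R_subset_T: "R \<subseteq> T" and X0_in_T: "X0 \<in> T"
  unfolding T_def by (auto intro: span_base)

lemma perp_T:
  assumes "inner n X0 = 0" and "\<And>u. u \<in> R \<Longrightarrow> inner n u = 0"
  shows "\<forall>s\<in>T. inner n s = 0"
  using assms unfolding T_eq by (auto simp: inner_add_right)

lemma orbit_tangent_eq_T: "orbit_tangent (a_plus R) (2 *\<^sub>R (0, w, 0) + y *\<^sub>R vecZ) = T"
proof -
  define V :: "'m an" where "V = 2 *\<^sub>R (0, w, 0) + y *\<^sub>R vecZ"
  have Ad: "Ad_Exp (- V) (t *\<^sub>R vecB + u) = t *\<^sub>R X0 + u" if "u \<in> R" for t u
  proof -
    obtain U where u: "u = (0, U, 0)" and "(0, U, 0) \<in> R"
      using \<open>u \<in> R\<close> by (rule R_cases)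
    have "an_bracket (- V) (t *\<^sub>R vecB + u) = (0, t *\<^sub>R w, t * y)"
      using w_perp(2)[OF \<open>(0, U, 0) \<in> R\<close>]
      by (simp add: V_def u vecZ_def vecB_def an_bracket_def linear_scale[OF linear_Jga]
          linear_neg[OF linear_Jga])
    moreover have "an_bracket (- V) (0, t *\<^sub>R w, t * y) = 0"
      by (simp add: V_def vecZ_def an_bracket_def linear_scale[OF linear_Jga]
          linear_neg[OF linear_Jga] zero_prod_def)
    ultimately show ?thesis
      by (simp add: Ad_Exp_eq_if_ad_square_zero u X0_def vecB_def)
  qed
  show ?thesis
    unfolding orbit_tangent_def V_def[symmetric] a_plus_def T_eq
  proof (intro set_eqI iffI)
    fix x
    assume "x \<in> Ad_Exp (- V) ` {t *\<^sub>R vecB + u | t u. u \<in> R}"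
    then obtain t u where "u \<in> R" and "x = Ad_Exp (- V) (t *\<^sub>R vecB + u)"
      by blast
    then have "x = t *\<^sub>R X0 + u"
      by (simp add: Ad)
    with \<open>u \<in> R\<close> show "x \<in> {t *\<^sub>R X0 + u | t u. u \<in> R}"
      by blast
  next
    fix x
    assume "x \<in> {t *\<^sub>R X0 + u | t u. u \<in> R}"
    then obtain t u where "u \<in> R" and "x = t *\<^sub>R X0 + u"
      by blast
    then have "x = Ad_Exp (- V) (t *\<^sub>R vecB + u)"
      by (simp add: Ad)
    moreover have "t *\<^sub>R vecB + u \<in> {t *\<^sub>R vecB + u | t u. u \<in> R}"
      using \<open>u \<in> R\<close> by blast
    ultimately show "x \<in> Ad_Exp (- V) ` {t *\<^sub>R vecB + u | t u. u \<in> R}"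
      by (rule image_eqI)
  qed
qed

lemma normal_part_T_eqI:
  assumes "inner n X0 = 0" and "\<And>u. u \<in> R \<Longrightarrow> inner n u = 0" and "v - n \<in> T"
  shows "normal_part T v = n"
  using normal_part_eqI[OF subspace_T perp_T[OF assms(1,2)] assms(3)] .

lemma inner_X0_X0_pos: "inner X0 X0 > 0"
  unfolding inner_X0_X0 by (simp add: add_pos_nonneg)

lemma inner_vecB_X0: "inner vecB X0 = 1"
  by (simp add: vecB_def X0_def)

lemma nabla_X0_X0: "nabla X0 X0 = ((norm w)\<^sup>2 / 2 + y\<^sup>2, - (1/2) *\<^sub>R w - y *\<^sub>R Jga w, - y)"
proof -
  have "(y / 2) *\<^sub>R Jga w + (y / 2) *\<^sub>R Jga w = y *\<^sub>R Jga w"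
    by (metis field_sum_of_halves scaleR_add_left)
  then show ?thesis
    unfolding X0_def nabla_eq power2_norm_eq_inner by (simp add: power2_eq_square diff_diff_eq)
qed

lemma sff_X0_X0: "sff T X0 X0 = nabla X0 X0"
  unfolding sff_def
proof (rule normal_part_T_eqI)
  show "inner (nabla X0 X0) X0 = 0"
    unfolding nabla_X0_X0 power2_norm_eq_inner
    by (simp add: X0_def inner_real_def inner_diff_left power2_eq_square)
  show "inner (nabla X0 X0) u = 0" if "u \<in> R" for u
    using that by (auto elim: R_cases simp: nabla_X0_X0 w_perp inner_diff_left)
qed (simp add: subspace_0[OF subspace_T])

definition sff_mixed :: "complex ^ 'm \<Rightarrow> 'm an" where
  "sff_mixed U = (0, - (y / 2) *\<^sub>R Jga U, 0)"

lemma nabla_X0_R: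
  assumes "(0, U, 0) \<in> R"
  shows "nabla X0 (0, U, 0) = sff_mixed U"
  using w_perp[OF assms] by (simp add: X0_def sff_mixed_def nabla_eq)

lemma nabla_R_X0:
  assumes "(0, U, 0) \<in> R"
  shows "nabla (0, U, 0) X0 = sff_mixed U - (1 / 2) *\<^sub>R (0, U, 0)"
  using w_perp[OF assms] by (simp add: X0_def sff_mixed_def nabla_eq inner_commute)

lemma nabla_R_R:
  assumes "(0, U, 0) \<in> R" and "(0, V, 0) \<in> R"
  shows "nabla (0, U, 0) (0, V, 0) = (inner U V / 2) *\<^sub>R vecB"
  using Jga_perp[OF assms] by (simp add: nabla_eq vecB_def)

lemma sff_mixed_normal:
  assumes "(0, U, 0) \<in> R"
  shows "inner (sff_mixed U) X0 = 0" and "u \<in> R \<Longrightarrow> inner (sff_mixed U) u = 0"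
  using assms by (auto elim: R_cases simp: sff_mixed_def X0_def w_perp Jga_perp)

lemma norm_sff_mixed: "(norm (sff_mixed U))\<^sup>2 = y\<^sup>2 / 4 * (norm U)\<^sup>2"
  by (simp add: sff_mixed_def power_mult_distrib power_divide abs_mult)

lemma sff_X0_R:
  assumes "(0, U, 0) \<in> R"
  shows "sff T X0 (0, U, 0) = sff_mixed U"
  unfolding sff_def nabla_X0_R[OF assms]
  by (rule normal_part_T_eqI) (simp_all add: sff_mixed_normal[OF assms] subspace_0[OF subspace_T])

lemma sff_R_X0:
  assumes "(0, U, 0) \<in> R"
  shows "sff T (0, U, 0) X0 = sff_mixed U"
  unfolding sff_def nabla_R_X0[OF assms]
proof (rule normal_part_T_eqI)
  have "- (1 / 2) *\<^sub>R (0, U, 0) \<in> T"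
    using assms R_subset_T subspace_scale[OF subspace_T] by blast
  then show "sff_mixed U - (1 / 2) *\<^sub>R (0, U, 0) - sff_mixed U \<in> T"
    by simp
qed (simp_all add: sff_mixed_normal[OF assms])

lemma normal_part_T_vecB: "normal_part T vecB = vecB - (1 / inner X0 X0) *\<^sub>R X0"
proof (rule normal_part_T_eqI)
  show "inner (vecB - (1 / inner X0 X0) *\<^sub>R X0) X0 = 0"
    using inner_X0_X0_pos by (simp add: inner_diff_left inner_vecB_X0)
  show "inner (vecB - (1 / inner X0 X0) *\<^sub>R X0) u = 0" if "u \<in> R" for u
    using that inner_X0_R[OF that] by (auto elim: R_cases simp: inner_diff_left vecB_def)
  show "vecB - (vecB - (1 / inner X0 X0) *\<^sub>R X0) \<in> T"
    using X0_in_T subspace_scale[OF subspace_T] by simp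
qed

lemma sff_R_R:
  assumes "u \<in> R" and "v \<in> R"
  shows "sff T u v = (inner u v / 2) *\<^sub>R normal_part T vecB"
proof -
  obtain U V where "u = (0, U, 0)" "(0, U, 0) \<in> R" "v = (0, V, 0)" "(0, V, 0) \<in> R"
    using assms by (metis R_cases)
  then show ?thesis
    unfolding sff_def using linear_scale[OF linear_normal_part[OF subspace_T]]
    by (simp add: nabla_R_R inner_real_def)
qed

lemma norm_nabla_X0_X0:
  "(norm (nabla X0 X0))\<^sup>2 = ((norm w)\<^sup>2 / 2 + y\<^sup>2)\<^sup>2 + (norm w)\<^sup>2 / 4 + y\<^sup>2 * (norm w)\<^sup>2 + y\<^sup>2"
  unfolding nabla_X0_X0 power2_norm_eq_inner
  by (simp add: inner_diff_left inner_diff_right inner_real_def power2_eq_square algebra_simps)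

lemma inner_nabla_X0_X0_normal_part_vecB:
  "inner (nabla X0 X0) (normal_part T vecB) = (norm w)\<^sup>2 / 2 + y\<^sup>2"
proof -
  have "inner (nabla X0 X0) X0 = 0"
    using normal_part[OF subspace_T, of "nabla X0 X0"] X0_in_T
    unfolding sff_def[symmetric] sff_X0_X0 by blast
  then show ?thesis
    unfolding normal_part_T_vecB inner_diff_right by (simp add: nabla_X0_X0 vecB_def)
qed

lemma norm_normal_part_T_vecB: "(norm (normal_part T vecB))\<^sup>2 = 1 - 1 / inner X0 X0"
proof -
  have "inner vecB vecB = 1"
    by (simp add: vecB_def)
  then show ?thesis
    unfolding power2_norm_eq_inner normal_part_T_vecB
    using inner_X0_X0_pos
    by (simp add: inner_diff_left inner_diff_right inner_commute[of X0 vecB] inner_vecB_X0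
        field_simps)
qed

lemma norm_sff_X0_R:
  assumes "u \<in> R"
  shows "(norm (sff T X0 u))\<^sup>2 = y\<^sup>2 / 4 * (norm u)\<^sup>2"
    and "(norm (sff T u X0))\<^sup>2 = y\<^sup>2 / 4 * (norm u)\<^sup>2"
proof -
  obtain U where "u = (0, U, 0)" and "(0, U, 0) \<in> R"
    using assms by (rule R_cases)
  then show "(norm (sff T X0 u))\<^sup>2 = y\<^sup>2 / 4 * (norm u)\<^sup>2"
    and "(norm (sff T u X0))\<^sup>2 = y\<^sup>2 / 4 * (norm u)\<^sup>2"
    by (simp_all add: sff_X0_R sff_R_X0 norm_sff_mixed norm_Pair)
qed

definition e0 :: "'m an" where
  "e0 = (1 / norm X0) *\<^sub>R X0"

lemma norm_e0: "norm e0 = 1"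
  using inner_X0_X0_pos by (simp add: e0_def)

lemma inner_e0_R: "u \<in> R \<Longrightarrow> inner e0 u = 0"
  by (simp add: e0_def inner_X0_R)

lemma sff_e0_e0: "sff T e0 e0 = (1 / inner X0 X0) *\<^sub>R nabla X0 X0"
  using bilinear_sff[OF subspace_T]
  by (simp add: e0_def bilinear_lmul bilinear_rmul sff_X0_X0 power2_norm_eq_inner[symmetric]
      power2_eq_square)

lemma norm_sff_e0_R:
  assumes "u \<in> R"
  shows "(norm (sff T e0 u))\<^sup>2 = y\<^sup>2 / (4 * inner X0 X0) * (norm u)\<^sup>2"
    and "(norm (sff T u e0))\<^sup>2 = y\<^sup>2 / (4 * inner X0 X0) * (norm u)\<^sup>2"
  using bilinear_sff[OF subspace_T]
  by (simp_all add: e0_def bilinear_lmul bilinear_rmul power_mult_distrib norm_sff_X0_R[OF assms]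
      power2_norm_eq_inner[symmetric] power_divide)

lemma adapted_orthonormal_basis:
  assumes B: "orthonormal_basis_of B R"
  shows "orthonormal_basis_of (insert e0 B) T" and "e0 \<notin> B"
proof -
  have "finite B" and "B \<subseteq> R" and "pairwise orthogonal B" and "\<forall>b\<in>B. norm b = 1"
    and "span B = R"
    using B unfolding orthonormal_basis_of_def by auto
  show "e0 \<notin> B"
  proof
    assume "e0 \<in> B"
    then have "inner e0 e0 = 0"
      using inner_e0_R \<open>B \<subseteq> R\<close> by blast
    with norm_e0 show False
      by (simp add: norm_eq_sqrt_inner)
  qed
  have "e0 \<in> T"
    unfolding e0_def using X0_in_T subspace_scale[OF subspace_T] by blast
  have "span (insert e0 B) = T"
  proof
    show "span (insert e0 B) \<subseteq> T"
      using \<open>e0 \<in> T\<close> \<open>B \<subseteq> R\<close> R_subset_T by (intro span_minimal subspace_T) auto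
    have "X0 = norm X0 *\<^sub>R e0"
      using inner_X0_X0_pos by (simp add: e0_def)
    then have "X0 \<in> span (insert e0 B)"
      by (metis insertI1 span_base span_mul)
    moreover have "R \<subseteq> span (insert e0 B)"
      using \<open>span B = R\<close> by (metis span_mono subset_insertI)
    ultimately show "T \<subseteq> span (insert e0 B)"
      unfolding T_def by (simp add: span_minimal)
  qed
  moreover have "pairwise orthogonal (insert e0 B)"
    using \<open>pairwise orthogonal B\<close> inner_e0_R \<open>B \<subseteq> R\<close>
    by (auto simp: pairwise_insert orthogonal_def inner_commute)
  ultimately show "orthonormal_basis_of (insert e0 B) T"
    unfolding orthonormal_basis_of_def
    using \<open>finite B\<close> \<open>e0 \<in> T\<close> \<open>B \<subseteq> R\<close> R_subset_T norm_e0 \<open>\<forall>b\<in>B. norm b = 1\<close>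
    by auto
qed

lemma mean_curv_adapted:
  assumes B: "orthonormal_basis_of B R"
  shows "mean_curv T (insert e0 B) =
    (1 / inner X0 X0) *\<^sub>R nabla X0 X0 + (real (card B) / 2) *\<^sub>R normal_part T vecB"
proof -
  have "finite B" and "B \<subseteq> R"
    using B unfolding orthonormal_basis_of_def by auto
  have "sff T b b = (1 / 2) *\<^sub>R normal_part T vecB" if "b \<in> B" for b
    using sff_R_R[of b b] that \<open>B \<subseteq> R\<close> orthonormal_basis_of_inner[OF B that that] by auto
  then have "(\<Sum>b\<in>B. sff T b b) = (real (card B) / 2) *\<^sub>R normal_part T vecB"
    by (simp add: sum_constant_scaleR)
  then show ?thesis
    unfolding mean_curv_def using \<open>finite B\<close> adapted_orthonormal_basis(2)[OF B]
    by (simp add: sff_e0_e0)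
qed

lemma sff_norm2_adapted:
  assumes B: "orthonormal_basis_of B R"
  shows "sff_norm2 T (insert e0 B) =
    (norm (nabla X0 X0))\<^sup>2 / (inner X0 X0)\<^sup>2 + real (card B) * y\<^sup>2 / (2 * inner X0 X0)
    + real (card B) / 4 * (norm (normal_part T vecB))\<^sup>2"
proof -
  have "finite B" and "B \<subseteq> R" and unit: "\<And>b. b \<in> B \<Longrightarrow> norm b = 1"
    using B unfolding orthonormal_basis_of_def by auto
  have inR: "b \<in> R" if "b \<in> B" for b
    using that \<open>B \<subseteq> R\<close> by blast
  have "(\<Sum>b\<in>B. (norm (sff T e0 b))\<^sup>2) = (\<Sum>b\<in>B. y\<^sup>2 / (4 * inner X0 X0))"
    and "(\<Sum>b\<in>B. (norm (sff T b e0))\<^sup>2) = (\<Sum>b\<in>B. y\<^sup>2 / (4 * inner X0 X0))"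
    by (simp_all add: norm_sff_e0_R[OF inR] unit cong: sum.cong)
  then have mixed: "(\<Sum>b\<in>B. (norm (sff T e0 b))\<^sup>2) = real (card B) * y\<^sup>2 / (4 * inner X0 X0)"
    "(\<Sum>b\<in>B. (norm (sff T b e0))\<^sup>2) = real (card B) * y\<^sup>2 / (4 * inner X0 X0)"
    by simp_all
  have row: "(\<Sum>b'\<in>B. (norm (sff T b b'))\<^sup>2) = (norm (normal_part T vecB))\<^sup>2 / 4"
    if "b \<in> B" for b
  proof -
    have "(\<Sum>b'\<in>B. (norm (sff T b b'))\<^sup>2) =
        (\<Sum>b'\<in>B. if b = b' then (norm (normal_part T vecB))\<^sup>2 / 4 else 0)"
      using that
      by (intro sum.cong refl)
        (simp add: sff_R_R[OF inR inR] orthonormal_basis_of_inner[OF B] power_mult_distrib power_divide)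
    then show ?thesis
      using \<open>finite B\<close> that by simp
  qed
  have "(\<Sum>b\<in>B. \<Sum>b'\<in>B. (norm (sff T b b'))\<^sup>2) = (\<Sum>b\<in>B. (norm (normal_part T vecB))\<^sup>2 / 4)"
    using row by (rule sum.cong[OF refl])
  then have "(\<Sum>b\<in>B. \<Sum>b'\<in>B. (norm (sff T b b'))\<^sup>2) = real (card B) / 4 * (norm (normal_part T vecB))\<^sup>2"
    by simp
  then show ?thesis
    unfolding sff_norm2_def using \<open>finite B\<close> adapted_orthonormal_basis(2)[OF B]
    by (simp add: sum.distrib mixed sff_e0_e0 power_divide)
qed

theorem norm_mean_curv:
  assumes E: "orthonormal_basis_of E T"
  shows "(norm (mean_curv T E))\<^sup>2 =
      ((1 + real (dim R))\<^sup>2 * (norm w)^4 + (2 + real (dim R))\<^sup>2 * y\<^sup>2 * (1 + y\<^sup>2)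
       + (norm w)\<^sup>2 * (1 + 8 * y\<^sup>2 + (real (dim R))\<^sup>2 * (1 + 2 * y\<^sup>2) + 2 * real (dim R) * (1 + 3 * y\<^sup>2)))
      / (4 * (1 + y\<^sup>2 + (norm w)\<^sup>2)\<^sup>2)"
proof -
  obtain B where B: "orthonormal_basis_of B R"
    using orthonormal_basis_of_exists[OF subspace_R] .
  define P where "P = nabla X0 X0"
  define Q where "Q = normal_part T vecB"
  define N where "N = inner X0 X0"
  define r where "r = real (dim R)"
  have "N = 1 + y\<^sup>2 + (norm w)\<^sup>2" and "N > 0"
    unfolding N_def using inner_X0_X0 inner_X0_X0_pos by simp_all
  have "mean_curv T E = mean_curv T (insert e0 B)"
    unfolding mean_curv_def
    using orthonormal_basis_of_trace_bilinear[OF E adapted_orthonormal_basis(1)[OF B]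
        bilinear_sff[OF subspace_T]] .
  also have "\<dots> = (1 / N) *\<^sub>R P + (r / 2) *\<^sub>R Q"
    unfolding mean_curv_adapted[OF B] orthonormal_basis_of_card[OF B] P_def Q_def N_def r_def ..
  finally have "(norm (mean_curv T E))\<^sup>2 = (norm P)\<^sup>2 / N\<^sup>2 + r / N * inner P Q + r\<^sup>2 / 4 * (norm Q)\<^sup>2"
    unfolding power2_norm_eq_inner using \<open>N > 0\<close>
    by (simp add: inner_add_left inner_add_right inner_commute[of Q P] power2_eq_square field_simps)
  also have "\<dots> = (((norm w)\<^sup>2 / 2 + y\<^sup>2)\<^sup>2 + (norm w)\<^sup>2 / 4 + y\<^sup>2 * (norm w)\<^sup>2 + y\<^sup>2) / N\<^sup>2
      + r / N * ((norm w)\<^sup>2 / 2 + y\<^sup>2) + r\<^sup>2 / 4 * (1 - 1 / N)"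
    unfolding P_def Q_def N_def norm_nabla_X0_X0 inner_nabla_X0_X0_normal_part_vecB
      norm_normal_part_T_vecB ..
  also have "\<dots> =
      ((1 + r)\<^sup>2 * (norm w)^4 + (2 + r)\<^sup>2 * y\<^sup>2 * (1 + y\<^sup>2)
       + (norm w)\<^sup>2 * (1 + 8 * y\<^sup>2 + r\<^sup>2 * (1 + 2 * y\<^sup>2) + 2 * r * (1 + 3 * y\<^sup>2)))
      / (4 * N\<^sup>2)"
    using \<open>N > 0\<close> by (simp add: field_simps)
      (simp add: \<open>N = 1 + y\<^sup>2 + (norm w)\<^sup>2\<close> power2_eq_square power4_eq_xxxx algebra_simps)
  finally show ?thesis
    unfolding r_def \<open>N = 1 + y\<^sup>2 + (norm w)\<^sup>2\<close> .
qed

theorem sff_norm2_eq: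
  assumes E: "orthonormal_basis_of E T"
  shows "sff_norm2 T E =
      ((1 + real (dim R)) * (norm w)^4 + (4 + 3 * real (dim R)) * y\<^sup>2 * (1 + y\<^sup>2)
       + (norm w)\<^sup>2 * (1 + real (dim R) + 4 * y\<^sup>2 * (2 + real (dim R))))
      / (4 * (1 + y\<^sup>2 + (norm w)\<^sup>2)\<^sup>2)"
proof -
  obtain B where B: "orthonormal_basis_of B R"
    using orthonormal_basis_of_exists[OF subspace_R] .
  define N where "N = inner X0 X0"
  define r where "r = real (dim R)"
  have "N = 1 + y\<^sup>2 + (norm w)\<^sup>2" and "N > 0"
    unfolding N_def using inner_X0_X0 inner_X0_X0_pos by simp_all
  have "sff_norm2 T E = sff_norm2 T (insert e0 B)"
    unfolding sff_norm2_def
    using orthonormal_basis_of_sum_norm_bilinear[OF E adapted_orthonormal_basis(1)[OF B]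
        bilinear_sff[OF subspace_T]] .
  also have "\<dots> = (((norm w)\<^sup>2 / 2 + y\<^sup>2)\<^sup>2 + (norm w)\<^sup>2 / 4 + y\<^sup>2 * (norm w)\<^sup>2 + y\<^sup>2) / N\<^sup>2
      + r * y\<^sup>2 / (2 * N) + r / 4 * (1 - 1 / N)"
    unfolding sff_norm2_adapted[OF B] orthonormal_basis_of_card[OF B] N_def r_def
      norm_nabla_X0_X0 norm_normal_part_T_vecB ..
  also have "\<dots> =
      ((1 + r) * (norm w)^4 + (4 + 3 * r) * y\<^sup>2 * (1 + y\<^sup>2)
       + (norm w)\<^sup>2 * (1 + r + 4 * y\<^sup>2 * (2 + r)))
      / (4 * N\<^sup>2)"
    using \<open>N > 0\<close> by (simp add: field_simps)
      (simp add: \<open>N = 1 + y\<^sup>2 + (norm w)\<^sup>2\<close> power2_eq_square power4_eq_xxxx algebra_simps)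
  finally show ?thesis
    unfolding r_def \<open>N = 1 + y\<^sup>2 + (norm w)\<^sup>2\<close> .
qed

end

theorem lemma4p3:
  fixes R :: "('m::finite) an set" and W :: "('m::finite) an" and y :: real and r :: nat and E :: "('m::finite) an set"
  assumes "totally_real R" and "dim R = r"
    and "W \<in> g_alpha" and "\<forall>u\<in>R. inner W u = 0 \<and> inner W (Jan u) = 0"
    and "orthonormal_basis_of E (orbit_tangent (a_plus R) (2 *\<^sub>R W + y *\<^sub>R vecZ))"
  shows "((norm (mean_curv (orbit_tangent (a_plus R) (2 *\<^sub>R W + y *\<^sub>R vecZ)) E))\<^sup>2 =
      ((1 + real r)\<^sup>2 * (norm W)^4 + (2 + real r)\<^sup>2 * y\<^sup>2 * (1 + y\<^sup>2)
       + (norm W)\<^sup>2 * (1 + 8 * y\<^sup>2 + (real r)\<^sup>2 * (1 + 2 * y\<^sup>2) + 2 * real r * (1 + 3 * y\<^sup>2)))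
      / (4 * (1 + y\<^sup>2 + (norm W)\<^sup>2)\<^sup>2)) \<and>
     (sff_norm2 (orbit_tangent (a_plus R) (2 *\<^sub>R W + y *\<^sub>R vecZ)) E =
      ((1 + real r) * (norm W)^4 + (4 + 3 * real r) * y\<^sup>2 * (1 + y\<^sup>2)
       + (norm W)\<^sup>2 * (1 + real r + 4 * y\<^sup>2 * (2 + real r)))
      / (4 * (1 + y\<^sup>2 + (norm W)\<^sup>2)\<^sup>2))"
proof -
  obtain w where W: "W = (0, w, 0)"
    using assms(3) unfolding g_alpha_def by auto
  interpret totally_real_orbit R w y
    using assms(1,4) unfolding W by unfold_locales auto
  have "orbit_tangent (a_plus R) (2 *\<^sub>R W + y *\<^sub>R vecZ) = T"
    unfolding W by (rule orbit_tangent_eq_T)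
  moreover have "norm W = norm w"
    by (simp add: W norm_Pair)
  ultimately show ?thesis
    using norm_mean_curv sff_norm2_eq assms(2,5) by simp
qed

end
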